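(* Let $a=t_0<t_1<\cdots<t_m=b$ be a partition of $[a,b]$ and let $x_0,x_1,\ldots,x_m\in\mathbb{R}^n$ be fixed. Let $A(t)$ and $B(t)$ be real $n\times n$ matrix functions on $[a,b]$ such that (H1) $B(t)$ has full rank (is nonsingular) for every $t$; (H2) the control system $\dot x(t)=A(t)x(t)+B(t)u(t)$ is completely state controllable; (H3) $t\mapsto A(t)$ and $t\mapsto B(t)$ are $C^1$-smooth. Consider the optimal control problem $(P)$: \[\min_{u(\cdot)}\ J[u(\cdot)]=\int_a^b\langle B(t)u(t),B(t)u(t)\rangle\,dt\] subject to $\dot x(t)=A(t)x(t)+B(t)u(t)$ and $x(t_i)=x_i$ for $i=0,1,\ldots,m$, with unrestricted control $u:[a,b]\to\mathbb{R}^n$ and absolutely continuous state $x:[a,b]\to\mathbb{R}^n$. Let $\Phi(t,s)$ be the state transition matrix of $\dot x=A(t)x$, and for each $i=0,\ldots,m-1$ let $S=\int_{t_i}^{t_{i+1}}\Phi(t_i,s)\Phi(t_i,s)'\,ds$ (a symmetric matrix). Then the optimal state trajectory of $(P)$ has, in each interval $[t_i,t_{i+1}]$, $i=0,1,\ldots,m-1$, the explicit expression \[x(t)=\Phi(t,t_i)x_i+\left(\int_{t_i}^{t}\Phi(t,s)\Phi(t_i,s)'\,ds\right)S^{-1}\big(\Phi(t_i,t_{i+1})x_{i+1}-x_i\big),\] and the optimal control of $(P)$ has, in each interval $[t_i,t_{i+1}]$, the explicit expression \[u(t)=B(t)^{-1}\Phi(t_i,t)'\,S^{-1}\big(\Ph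i(t_i,t_{i+1})x_{i+1}-x_i\big).\]
   Context: $\langle\cdot,\cdot\rangle$ is the Euclidean inner product on $\mathbb{R}^n$ and a prime ${}'$ denotes transpose. The state transition matrix $\Phi(t,s)$ is the matrix with $\frac{\partial}{\partial t}\Phi(t,s)=A(t)\Phi(t,s)$ and $\Phi(s,s)=I$. *)

theory Defs
  imports "HOL-Analysis.Analysis"
begin

text \<open>Admissible process on [c,d] for the system x' = A x + B u:
  the control u is (Lebesgue) measurable with B u square integrable (finite cost),
  and the state x is absolutely continuous with x' = A x + B u a.e., expressed in the
  equivalent integral form x(tau) = x(c) + integral of an absolutely integrable
  right-hand side.\<close>
definition admissible ::
  "(real \<Rightarrow> real^'n^'n) \<Rightarrow> (real \<Rightarrow> real^'n^'n) \<Rightarrow> real \<Rightarrow> real \<Rightarrow>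
   (real \<Rightarrow> real^'n) \<Rightarrow> (real \<Rightarrow> real^'n) \<Rightarrow> bool" where
  "admissible A B c d x u \<longleftrightarrow>
     u measurable_on {c..d} \<and>
     (\<lambda>s. (B s *v u s) \<bullet> (B s *v u s)) integrable_on {c..d} \<and>
     (\<lambda>s. A s *v x s + B s *v u s) absolutely_integrable_on {c..d} \<and>
     (\<forall>\<tau>\<in>{c..d}. x \<tau> = x c + integral {c..\<tau>} (\<lambda>s. A s *v x s + B s *v u s))"

definition completely_controllable ::
  "(real \<Rightarrow> real^'n^'n) \<Rightarrow> (real \<Rightarrow> real^'n^'n) \<Rightarrow> real \<Rightarrow> real \<Rightarrow> bool" where
  "completely_controllable A B a b \<longleftrightarrow>
     (\<forall>c d (y0::real^'n) y1. a \<le> c \<and> c < d \<and> d \<le> b \<longrightarrow>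
        (\<exists>x u. admissible A B c d x u \<and> x c = y0 \<and> x d = y1))"

definition state_transition ::
  "(real \<Rightarrow> real^'n^'n) \<Rightarrow> real \<Rightarrow> real \<Rightarrow> (real \<Rightarrow> real \<Rightarrow> real^'n^'n) \<Rightarrow> bool" where
  "state_transition A a b \<Phi> \<longleftrightarrow>
     (\<forall>s\<in>{a..b}. \<Phi> s s = mat 1 \<and>
        (\<forall>t\<in>{a..b}. ((\<lambda>r. \<Phi> r s) has_vector_derivative (A t ** \<Phi> t s)) (at t within {a..b})))"

definition cost :: "(real \<Rightarrow> real^'n^'n) \<Rightarrow> real \<Rightarrow> real \<Rightarrow> (real \<Rightarrow> real^'n) \<Rightarrow> real" where
  "cost B a b u = integral {a..b} (\<lambda>s. (B s *v u s) \<bullet> (B s *v u s))"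

definition feasibleP where
  "feasibleP A B a b m (tp :: nat \<Rightarrow> real) (xs :: nat \<Rightarrow> real^'n) x u \<longleftrightarrow>
     admissible A B a b x u \<and> (\<forall>i\<le>m. x (tp i) = xs i)"

definition optimalP where
  "optimalP A B a b m tp xs x u \<longleftrightarrow>
     feasibleP A B a b m tp xs x u \<and>
     (\<forall>x' u'. feasibleP A B a b m tp xs x' u' \<longrightarrow> cost B a b u \<le> cost B a b u')"

end

theory Submission
  imports Defs
begin

text \<open>
  Write \<open>w = B u\<close>. On a segment \<open>[t\<^sub>i, t\<^sub>i\<^sub>+\<^sub>1]\<close> variation of constants turns the two
  interpolation conditions into the moment equation \<open>\<integral> \<Phi>(t\<^sub>i, s) w(s) ds = v\<close> with
  \<open>v = \<Phi>(t\<^sub>i, t\<^sub>i\<^sub>+\<^sub>1) x\<^sub>i\<^sub>+\<^sub>1 - x\<^sub>i\<close>, a linear constraint on \<open>w\<close> alone, while the cost is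
  \<open>\<integral> |w|\<^sup>2\<close>. The Gram matrix \<open>S\<close> is invertible because \<open>\<Phi>(t\<^sub>i, t\<^sub>i) = I\<close>, so
  \<open>w\<^sup>* = \<Phi>(t\<^sub>i, \<cdot>)' S\<^sup>-\<^sup>1 v\<close> satisfies the constraint, and for every admissible \<open>w\<close> the
  cross term \<open>\<integral> \<langle>w\<^sup>*, w - w\<^sup>*\<rangle> = \<langle>S\<^sup>-\<^sup>1 v, v - v\<rangle>\<close> vanishes. Hence the cost of \<open>w\<close> is
  the cost of \<open>w\<^sup>*\<close> plus \<open>\<integral> |w - w\<^sup>*|\<^sup>2\<close>: \<open>w\<^sup>*\<close> is optimal, every optimal control has
  \<open>B u = w\<^sup>*\<close> almost everywhere, and the optimal state is variation of constants applied
  to \<open>w\<^sup>*\<close>. As states are only absolutely continuous, variation of constants rests on an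
  integration by parts against indefinite integrals of integrable functions.
\<close>

lemma bilinear_matrix_matrix_mult: "bilinear ((**) :: real^'m^'k \<Rightarrow> real^'n^'m \<Rightarrow> _)"
  unfolding bilinear_def
  by (auto intro!: linearI simp: vec_eq_iff matrix_matrix_mult_def sum_distrib_left sum.distrib algebra_simps)

lemma bilinear_matrix_vector_mult: "bilinear ((*v) :: real^'m^'k \<Rightarrow> real^'m \<Rightarrow> _)"
  unfolding bilinear_def
  by (auto intro!: linearI simp: vec_eq_iff matrix_vector_mult_def sum_distrib_left sum.distrib algebra_simps)

lemma bounded_bilinear_matrix_matrix_mult [bounded_bilinear]:
  "bounded_bilinear ((**) :: real^'m^'k \<Rightarrow> real^'n^'m \<Rightarrow> _)"
  using bilinear_matrix_matrix_mult bilinear_conv_bounded_bilinear by blast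

lemma bounded_bilinear_matrix_vector_mult [bounded_bilinear]:
  "bounded_bilinear ((*v) :: real^'m^'k \<Rightarrow> real^'m \<Rightarrow> _)"
  using bilinear_matrix_vector_mult bilinear_conv_bounded_bilinear by blast

lemma continuous_on_transpose [continuous_intros]:
  "continuous_on S (f :: 'x::topological_space \<Rightarrow> real^'n^'m) \<Longrightarrow> continuous_on S (\<lambda>x. transpose (f x))"
  unfolding transpose_def
  by (intro continuous_on_vec_lambda allI continuous_on_component)

lemma continuous_on_det [continuous_intros]:
  "continuous_on S (f :: 'x::topological_space \<Rightarrow> real^'n^'n) \<Longrightarrow> continuous_on S (\<lambda>x. det (f x))"
  unfolding det_def
  by (intro continuous_intros continuous_on_component)

lemma matrix_inv_right: "invertible (A::real^'n^'n) \<Longrightarrow> A ** matrix_inv A = mat 1"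
  and matrix_inv_left: "invertible (A::real^'n^'n) \<Longrightarrow> matrix_inv A ** A = mat 1"
  using someI_ex[of "\<lambda>A'. A ** A' = mat 1 \<and> A' ** A = mat 1"]
  unfolding invertible_def matrix_inv_def by auto

lemma matrix_inv_eq:
  fixes A A' :: "real^'n^'n"
  assumes "A ** A' = mat 1"
  shows "matrix_inv A = A'"
proof -
  have "invertible A"
    using assms matrix_left_right_inverse invertible_def by blast
  then have "matrix_inv A = matrix_inv A ** (A ** A')"
    by (simp add: assms)
  also have "\<dots> = A'"
    by (simp add: matrix_mul_assoc matrix_inv_left \<open>invertible A\<close>)
  finally show ?thesis .
qed

lemma matrix_inv_cramer:
  fixes A :: "real^'n^'n"
  assumes "invertible A"
  shows "matrix_inv A = (\<chi> i j. det (\<chi> k l. if l = i then axis j 1 $ k else A $ k $ l) / det A)"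
proof -
  have "matrix_inv A $ i $ j = det (\<chi> k l. if l = i then axis j 1 $ k else A $ k $ l) / det A" for i j
  proof -
    have "A *v (matrix_inv A *v axis j 1) = axis j 1"
      by (simp add: matrix_vector_mul_assoc matrix_inv_right assms)
    then have "matrix_inv A *v axis j 1 = (\<chi> i. det (\<chi> k l. if l = i then axis j 1 $ k else A $ k $ l) / det A)"
      using cramer assms invertible_det_nz by blast
    then have "(matrix_inv A *v axis j 1) $ i = det (\<chi> k l. if l = i then axis j 1 $ k else A $ k $ l) / det A"
      by simp
    moreover have "(matrix_inv A *v axis j 1) $ i = matrix_inv A $ i $ j"
      by (simp add: matrix_vector_mult_def axis_def if_distrib cong: if_cong)
    ultimately show ?thesis by simp
  qed
  then show ?thesis by (simp add: vec_eq_iff)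
qed

lemma continuous_on_matrix_inv:
  fixes f :: "'x::topological_space \<Rightarrow> real^'n^'n"
  assumes f: "continuous_on S f" and inv: "\<And>x. x \<in> S \<Longrightarrow> invertible (f x)"
  shows "continuous_on S (\<lambda>x. matrix_inv (f x))"
proof -
  have minor: "continuous_on S (\<lambda>x. (\<chi> k l. if l = i then axis j 1 $ k else f x $ k $ l) :: real^'n^'n)" for i j
  proof (intro continuous_on_vec_lambda allI)
    fix k l
    show "continuous_on S (\<lambda>x. if l = i then axis j 1 $ k else f x $ k $ l)"
      by (cases "l = i") (simp_all add: continuous_on_component f)
  qed
  have "continuous_on S (\<lambda>x. (\<chi> i j. det (\<chi> k l. if l = i then axis j 1 $ k else f x $ k $ l) / det (f x)) :: real^'n^'n)"
    using inv invertible_det_nz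
    by (intro continuous_on_vec_lambda allI continuous_on_divide continuous_on_det[OF minor] continuous_on_det[OF f]) auto
  then show ?thesis
    by (rule continuous_on_eq) (simp add: matrix_inv_cramer inv)
qed

section \<open>Uniqueness for linear differential equations\<close>

lemma nonincreasing_if_derivative_nonpos:
  fixes f :: "real \<Rightarrow> real"
  assumes "\<alpha> \<le> \<beta>"
    and "\<And>s. s \<in> {\<alpha>..\<beta>} \<Longrightarrow> (f has_real_derivative f' s) (at s within {\<alpha>..\<beta>})"
    and "\<And>s. s \<in> {\<alpha>..\<beta>} \<Longrightarrow> f' s \<le> 0"
  shows "f \<beta> \<le> f \<alpha>"
proof -
  have "\<exists>\<xi>\<in>{\<alpha>..\<beta>}. f \<beta> - f \<alpha> = f' \<xi> * (\<beta> - \<alpha>)"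
    by (rule mvt_very_simple[OF assms(1)]) (use assms(2) in \<open>auto simp: has_field_derivative_def\<close>)
  then obtain \<xi> where "\<xi> \<in> {\<alpha>..\<beta>}" "f \<beta> - f \<alpha> = f' \<xi> * (\<beta> - \<alpha>)"
    by blast
  with assms(1) assms(3)[of \<xi>] show ?thesis
    using mult_nonpos_nonneg[of "f' \<xi>" "\<beta> - \<alpha>"] by simp
qed

lemma linear_growth_real_le_0:
  fixes g :: "real \<Rightarrow> real"
  assumes g': "\<And>s. s \<in> {c..d} \<Longrightarrow> (g has_real_derivative g' s) (at s within {c..d})"
    and growth: "\<And>s. s \<in> {c..d} \<Longrightarrow> \<bar>g' s\<bar> \<le> L * g s"
    and t0: "t0 \<in> {c..d}" "g t0 = 0" and t: "t \<in> {c..d}"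
  shows "g t \<le> 0"
proof (cases "t0 \<le> t")
  case True
  have "exp (- L * t) * g t \<le> exp (- L * t0) * g t0"
  proof (rule nonincreasing_if_derivative_nonpos[where f = "\<lambda>s. exp (- L * s) * g s", OF True])
    fix s assume s: "s \<in> {t0..t}"
    then have "s \<in> {c..d}" using t0 t by auto
    show "((\<lambda>s. exp (- L * s) * g s) has_real_derivative exp (- L * s) * (g' s - L * g s)) (at s within {t0..t})"
      using DERIV_subset[OF g'[OF \<open>s \<in> {c..d}\<close>]] t0 t
      by (auto intro!: derivative_eq_intros simp: algebra_simps)
    show "exp (- L * s) * (g' s - L * g s) \<le> 0"
      using growth[OF \<open>s \<in> {c..d}\<close>] by (intro mult_nonneg_nonpos) auto
  qed
  then show ?thesis using t0 by (simp add: mult_le_0_iff)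
next
  case False
  have "- (exp (L * t0) * g t0) \<le> - (exp (L * t) * g t)"
  proof (rule nonincreasing_if_derivative_nonpos[where f = "\<lambda>s. - (exp (L * s) * g s)"])
    show "t \<le> t0" using False by simp
    fix s assume s: "s \<in> {t..t0}"
    then have "s \<in> {c..d}" using t0 t by auto
    show "((\<lambda>s. - (exp (L * s) * g s)) has_real_derivative - (exp (L * s) * (g' s + L * g s))) (at s within {t..t0})"
      using DERIV_subset[OF g'[OF \<open>s \<in> {c..d}\<close>]] t0 t
      by (auto intro!: derivative_eq_intros simp: algebra_simps)
    show "- (exp (L * s) * (g' s + L * g s)) \<le> 0"
      using growth[OF \<open>s \<in> {c..d}\<close>] by (simp add: abs_le_iff)
  qed
  then show ?thesis using t0 by (simp add: mult_le_0_iff)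
qed

lemma linear_growth_zero_unique:
  fixes y :: "real \<Rightarrow> 'v::real_inner"
  assumes y': "\<And>t. t \<in> {c..d} \<Longrightarrow> (y has_vector_derivative y' t) (at t within {c..d})"
    and growth: "\<And>t. t \<in> {c..d} \<Longrightarrow> norm (y' t) \<le> L * norm (y t)"
    and "t0 \<in> {c..d}" "y t0 = 0" "t \<in> {c..d}"
  shows "y t = 0"
proof -
  have "((\<lambda>s. y s \<bullet> y s) has_real_derivative 2 * (y s \<bullet> y' s)) (at s within {c..d})" if "s \<in> {c..d}" for s
    unfolding has_field_derivative_def
    by (rule has_derivative_eq_rhs[OF has_derivative_inner[OF y'[OF that, unfolded has_vector_derivative_def]
          y'[OF that, unfolded has_vector_derivative_def]]])
      (auto simp: fun_eq_iff inner_commute algebra_simps)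
  moreover have "\<bar>2 * (y s \<bullet> y' s)\<bar> \<le> 2 * L * (y s \<bullet> y s)" if "s \<in> {c..d}" for s
  proof -
    have "\<bar>y s \<bullet> y' s\<bar> \<le> norm (y s) * (L * norm (y s))"
      using Cauchy_Schwarz_ineq2 mult_left_mono[OF growth[OF that] norm_ge_zero] by (rule order_trans)
    then show ?thesis by (simp add: power2_norm_eq_inner[symmetric] power2_eq_square algebra_simps)
  qed
  ultimately have "y t \<bullet> y t \<le> 0"
    using assms(3-5) by (intro linear_growth_real_le_0[where g = "\<lambda>s. y s \<bullet> y s"]) auto
  then show ?thesis
    by (metis inner_gt_zero_iff not_less)
qed

lemma bounded_bilinear_ode_zero_unique:
  fixes y :: "real \<Rightarrow> 'v::real_inner" and A :: "real \<Rightarrow> 'a::real_normed_vector"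
    and h :: "'a \<Rightarrow> 'v \<Rightarrow> 'v"
  assumes "bounded_bilinear h" and "continuous_on {c..d} A"
    and "\<And>t. t \<in> {c..d} \<Longrightarrow> (y has_vector_derivative h (A t) (y t)) (at t within {c..d})"
    and "t0 \<in> {c..d}" "y t0 = 0" "t \<in> {c..d}"
  shows "y t = 0"
proof -
  obtain K where K: "\<And>s. s \<in> {c..d} \<Longrightarrow> norm (A s) \<le> K"
    using compact_imp_bounded[OF compact_continuous_image[OF assms(2) compact_Icc]]
    unfolding bounded_iff by blast
  obtain C where C: "\<And>a x. norm (h a x) \<le> norm a * norm x * C" "C > 0"
    using bounded_bilinear.pos_bounded[OF assms(1)] by blast
  have "norm (h (A s) (y s)) \<le> (K * C) * norm (y s)" if "s \<in> {c..d}" for s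
  proof -
    have "norm (h (A s) (y s)) \<le> norm (A s) * norm (y s) * C" by (rule C(1))
    also have "\<dots> \<le> K * norm (y s) * C"
      using K[OF that] C(2) by (intro mult_right_mono) auto
    finally show ?thesis by (simp add: algebra_simps)
  qed
  then show ?thesis
    using linear_growth_zero_unique[OF assms(3)] assms(4-6) by blast
qed

lemma absolutely_integrable_bounded_bilinear_continuous:
  fixes h :: "'a::euclidean_space \<Rightarrow> 'b::euclidean_space \<Rightarrow> 'c::euclidean_space"
    and f :: "real \<Rightarrow> 'a"
  assumes "bounded_bilinear h" "continuous_on {c..d} f" "g absolutely_integrable_on {c..d}"
  shows "(\<lambda>x. h (f x) (g x)) absolutely_integrable_on {c..d}"
proof -
  have "bilinear h"
    using assms(1) bilinear_conv_bounded_bilinear by blast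
  moreover have "f \<in> borel_measurable (lebesgue_on {c..d})"
    using assms(2) by (intro continuous_imp_measurable_on_sets_lebesgue) auto
  moreover have "bounded (f ` {c..d})"
    using assms(2) by (intro compact_imp_bounded compact_continuous_image) auto
  ultimately show ?thesis
    using absolutely_integrable_bounded_measurable_product[of h f "{c..d}" g] assms(3) by simp
qed

lemma integral_spike_AE:
  assumes "AE x in lebesgue. x \<in> S \<longrightarrow> f x = g x"
  shows "integral S f = integral S g"
proof -
  obtain N where N: "negligible N" "{x. \<not> (x \<in> S \<longrightarrow> f x = g x)} \<subseteq> N"
    using assms[unfolded eventually_ae_filter_negligible] by (elim exE conjE)
  show ?thesis
    by (rule integral_spike[OF N(1)]) (use N(2) in auto)
qed

lemma nonneg_integral_eq_0_imp_AE:
  fixes f :: "real \<Rightarrow> real"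
  assumes f: "f integrable_on S" and nonneg: "\<And>x. x \<in> S \<Longrightarrow> f x \<ge> 0" and "integral S f = 0"
  shows "AE x in lebesgue. x \<in> S \<longrightarrow> f x = 0"
proof -
  have "f absolutely_integrable_on S"
    using nonneg by (intro absolutely_integrable_onI f integrable_eq[OF f]) simp
  then have "integrable lebesgue (\<lambda>x. indicat_real S x *\<^sub>R f x)"
    and "set_lebesgue_integral lebesgue S f = 0"
    using set_lebesgue_integral_eq_integral(2) \<open>integral S f = 0\<close> by (metis set_integrable_def)+
  then have "integrable lebesgue (\<lambda>x. indicat_real S x *\<^sub>R f x)" "(\<integral>x. indicator S x *\<^sub>R f x \<partial>lebesgue) = 0"
    unfolding set_lebesgue_integral_def by simp_all
  then have "AE x in lebesgue. indicator S x *\<^sub>R f x = 0"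
    using integral_nonneg_eq_0_iff_AE[of lebesgue "\<lambda>x. indicat_real S x *\<^sub>R f x"] nonneg
    by (auto simp: indicator_def)
  then show ?thesis
    by eventually_elim (auto simp: indicator_def split: if_splits)
qed

lemma consecutive_le:
  fixes tp :: "nat \<Rightarrow> 'a::preorder"
  assumes "\<And>i. i < m \<Longrightarrow> tp i \<le> tp (Suc i)" "i \<le> j" "j \<le> m"
  shows "tp i \<le> tp j"
  using assms(2,3)
proof (induction j)
  case (Suc j)
  then show ?case
    using assms(1)[of j] by (auto simp: le_Suc_eq intro: order_trans)
qed simp

lemma integrable_on_consecutive_intervals:
  fixes f :: "real \<Rightarrow> 'a::banach"
  assumes "\<And>i. i < m \<Longrightarrow> tp i \<le> tp (Suc i)"
    and "\<And>i. i < m \<Longrightarrow> f integrable_on {tp i..tp (Suc i)}"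
  shows "f integrable_on {tp 0..tp m}"
  using assms
proof (induction m)
  case (Suc m)
  have "f integrable_on {tp 0..tp m}"
    using Suc.prems by (intro Suc.IH) auto
  moreover have "tp 0 \<le> tp m"
    using Suc.prems(1) consecutive_le[of m tp 0 m] by simp
  ultimately show ?case
    using Suc.prems Henstock_Kurzweil_Integration.integrable_combine[of "tp 0" "tp m" "tp (Suc m)" f] by simp
qed (simp add: integrable_negligible)

lemma integral_consecutive_intervals:
  fixes f :: "real \<Rightarrow> 'a::banach"
  assumes "\<And>i. i < m \<Longrightarrow> tp i \<le> tp (Suc i)"
    and "f integrable_on {tp 0..tp m}"
  shows "integral {tp 0..tp m} f = (\<Sum>i<m. integral {tp i..tp (Suc i)} f)"
  using assms
proof (induction m)
  case (Suc m)
  have "tp 0 \<le> tp m" "tp m \<le> tp (Suc m)"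
    using Suc.prems(1) consecutive_le[of m tp 0 m] by auto
  moreover have "f integrable_on {tp 0..tp m}"
    by (rule integrable_on_subinterval[OF Suc.prems(2)]) (use calculation in auto)
  moreover have "integral {tp 0..tp m} f = (\<Sum>i<m. integral {tp i..tp (Suc i)} f)"
    using Suc.prems(1) calculation(3) by (intro Suc.IH) auto
  ultimately show ?case
    using Henstock_Kurzweil_Integration.integral_combine[of "tp 0" "tp m" "tp (Suc m)" f] Suc.prems(2) by simp
qed simp

lemma norm_diff_le_if_locally_le:
  fixes f :: "real \<Rightarrow> 'a::real_normed_vector"
  assumes "c \<le> d" "\<delta> > 0"
    and near: "\<And>\<alpha> \<beta>. c \<le> \<alpha> \<Longrightarrow> \<alpha> \<le> \<beta> \<Longrightarrow> \<beta> \<le> d \<Longrightarrow> \<beta> - \<alpha> < \<delta> \<Longrightarrow>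
      norm (f \<beta> - f \<alpha>) \<le> P \<beta> - P \<alpha>"
  shows "norm (f d - f c) \<le> P d - P c"
proof -
  obtain N :: nat where N: "(d - c) / \<delta> < N"
    using reals_Archimedean2 by blast
  then have "N > 0"
    using assms(1,2) by (cases N) (auto simp: field_simps)
  define \<eta> where "\<eta> = (d - c) / N"
  have \<eta>: "0 \<le> \<eta>" "\<eta> < \<delta>" "c + N * \<eta> = d"
    using assms(1,2) N \<open>N > 0\<close> by (auto simp: \<eta>_def field_simps)
  have "norm (f (c + k * \<eta>) - f c) \<le> P (c + k * \<eta>) - P c" if "k \<le> N" for k
    using that
  proof (induction k)
    case (Suc k)
    have "k * \<eta> \<le> N * \<eta>" "Suc k * \<eta> \<le> N * \<eta>"
      using Suc.prems \<eta>(1) by (auto intro: mult_right_mono)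
    then have "norm (f (c + Suc k * \<eta>) - f (c + k * \<eta>)) \<le> P (c + Suc k * \<eta>) - P (c + k * \<eta>)"
      using \<eta> by (intro near) (auto simp: algebra_simps)
    with Suc show ?case
      using norm_triangle_ineq[of "f (c + Suc k * \<eta>) - f (c + k * \<eta>)" "f (c + k * \<eta>) - f c"] by simp
  qed simp
  from this[of N] show ?thesis
    using \<eta>(3) by simp
qed

section \<open>Integration by parts against an absolutely continuous function\<close>

text \<open>
  \<open>Y\<close> is only an indefinite integral of an integrable \<open>g\<close>, so the product rule cannot be
  applied pointwise. Instead the increments of \<open>by_parts_defect\<close> over short intervals are
  bounded by \<open>e\<close> times the integral of \<open>norm M' + norm g\<close>, using uniform continuity of
  \<open>M\<close> and \<open>Y\<close>, and summed over a fine uniform partition.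
\<close>

context
  fixes h :: "'a::euclidean_space \<Rightarrow> 'b::euclidean_space \<Rightarrow> 'c::euclidean_space"
    and M M' :: "real \<Rightarrow> 'a" and Y g :: "real \<Rightarrow> 'b" and c d :: real
  assumes h: "bounded_bilinear h"
    and M': "\<And>t. t \<in> {c..d} \<Longrightarrow> (M has_vector_derivative M' t) (at t within {c..d})"
    and M'_cont: "continuous_on {c..d} M'"
    and g: "g absolutely_integrable_on {c..d}"
    and Y: "\<And>t. t \<in> {c..d} \<Longrightarrow> Y t = Y c + integral {c..t} g"
begin

definition by_parts_defect :: "real \<Rightarrow> 'c" where
  "by_parts_defect t = h (M t) (Y t) - h (M c) (Y c)
    - integral {c..t} (\<lambda>s. h (M s) (g s)) - integral {c..t} (\<lambda>s. h (M' s) (Y s))"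

lemma by_parts_continuous: "continuous_on {c..d} M" "continuous_on {c..d} Y"
proof -
  show "continuous_on {c..d} M"
    using has_vector_derivative_continuous[OF M'] by (auto simp: continuous_on_eq_continuous_within)
  have "continuous_on {c..d} (\<lambda>t. Y c + integral {c..t} g)"
    using g by (intro continuous_intros indefinite_integral_continuous_1) (simp add: absolutely_integrable_on_def)
  then show "continuous_on {c..d} Y"
    by (rule continuous_on_eq) (rule Y[symmetric])
qed

lemma by_parts_defect_increment:
  assumes "c \<le> \<alpha>" "\<alpha> \<le> \<beta>" "\<beta> \<le> d"
  shows "by_parts_defect \<beta> - by_parts_defect \<alpha> =
    integral {\<alpha>..\<beta>} (\<lambda>s. h (M' s) (Y \<alpha> - Y s)) + integral {\<alpha>..\<beta>} (\<lambda>s. h (M \<beta> - M s) (g s))"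
proof -
  interpret h: bounded_bilinear h by (rule h)
  have sub: "{\<alpha>..\<beta>} \<subseteq> {c..d}" "{c..\<beta>} \<subseteq> {c..d}"
    using assms by auto
  have int_g: "g integrable_on {c..d}"
    using g by (simp add: absolutely_integrable_on_def)
  have int_Mg: "(\<lambda>s. h (M s) (g s)) integrable_on {c..d}"
    using absolutely_integrable_bounded_bilinear_continuous[OF h by_parts_continuous(1) g]
    by (simp add: absolutely_integrable_on_def)
  have int_M'Y: "(\<lambda>s. h (M' s) (Y s)) integrable_on {c..d}"
    by (intro integrable_continuous_real h.continuous_on M'_cont by_parts_continuous)
  have split: "integral {c..\<beta>} f = integral {c..\<alpha>} f + integral {\<alpha>..\<beta>} f"
    if "f integrable_on {c..d}" for f :: "real \<Rightarrow> 'z::banach"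
    using Henstock_Kurzweil_Integration.integral_combine[OF assms(1,2) integrable_on_subinterval[OF that sub(2)]]
    by simp
  have Y\<beta>: "Y \<beta> = Y \<alpha> + integral {\<alpha>..\<beta>} g"
    using Y[of \<alpha>] Y[of \<beta>] split[OF int_g] assms by simp
  have ftc: "(M' has_integral M \<beta> - M \<alpha>) {\<alpha>..\<beta>}"
    using assms sub(1) by (intro fundamental_theorem_of_calculus has_vector_derivative_within_subset[OF M']) auto
  have "h (M \<beta>) (Y \<beta>) - h (M \<alpha>) (Y \<alpha>) = h (M \<beta> - M \<alpha>) (Y \<alpha>) + h (M \<beta>) (integral {\<alpha>..\<beta>} g)"
    by (simp add: Y\<beta> h.diff_left h.add_right)
  also have "\<dots> = integral {\<alpha>..\<beta>} (\<lambda>s. h (M' s) (Y \<alpha>)) + integral {\<alpha>..\<beta>} (\<lambda>s. h (M \<beta>) (g s))"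
    using integral_unique[OF has_integral_linear[OF ftc h.bounded_linear_left]]
      integral_linear[OF integrable_on_subinterval[OF int_g sub(1)] h.bounded_linear_right]
    by (simp add: o_def)
  finally have "by_parts_defect \<beta> - by_parts_defect \<alpha> =
      (integral {\<alpha>..\<beta>} (\<lambda>s. h (M' s) (Y \<alpha>)) - integral {\<alpha>..\<beta>} (\<lambda>s. h (M' s) (Y s)))
      + (integral {\<alpha>..\<beta>} (\<lambda>s. h (M \<beta>) (g s)) - integral {\<alpha>..\<beta>} (\<lambda>s. h (M s) (g s)))"
    unfolding by_parts_defect_def split[OF int_Mg] split[OF int_M'Y]
    by (simp add: algebra_simps)
  also have "\<dots> = integral {\<alpha>..\<beta>} (\<lambda>s. h (M' s) (Y \<alpha>) - h (M' s) (Y s))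
      + integral {\<alpha>..\<beta>} (\<lambda>s. h (M \<beta>) (g s) - h (M s) (g s))"
    using sub(1)
    by (intro arg_cong2[where f = "(+)"] integral_diff[symmetric] integrable_continuous_real h.continuous_on
        continuous_intros continuous_on_subset[OF M'_cont] continuous_on_subset[OF by_parts_continuous(2)]
        integrable_on_subinterval[OF int_Mg sub(1)]
        integrable_linear[OF integrable_on_subinterval[OF int_g sub(1)] h.bounded_linear_right, unfolded o_def])
  finally show ?thesis
    by (simp add: h.diff_left h.diff_right)
qed

lemma norm_by_parts_defect_increment_le:
  assumes ab: "c \<le> \<alpha>" "\<alpha> \<le> \<beta>" "\<beta> \<le> d"
    and K: "\<And>x y. norm (h x y) \<le> norm x * norm y * K"
    and close: "\<And>s. s \<in> {\<alpha>..\<beta>} \<Longrightarrow> norm (Y \<alpha> - Y s) * K \<le> e \<and> norm (M \<beta> - M s) * K \<le> e"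
  shows "norm (by_parts_defect \<beta> - by_parts_defect \<alpha>) \<le> e * integral {\<alpha>..\<beta>} (\<lambda>s. norm (M' s) + norm (g s))"
proof -
  interpret h: bounded_bilinear h by (rule h)
  have sub: "{\<alpha>..\<beta>} \<subseteq> {c..d}"
    using ab by auto
  have g_sub: "g absolutely_integrable_on {\<alpha>..\<beta>}"
    using absolutely_integrable_on_subinterval[OF g sub] .
  have int_M': "(\<lambda>s. norm (M' s)) integrable_on {\<alpha>..\<beta>}"
    by (intro integrable_continuous_real continuous_intros continuous_on_subset[OF M'_cont sub])
  have int_g: "(\<lambda>s. norm (g s)) integrable_on {\<alpha>..\<beta>}"
    using g_sub by (simp add: absolutely_integrable_on_def)
  have le1: "norm (integral {\<alpha>..\<beta>} (\<lambda>s. h (M' s) (Y \<alpha> - Y s))) \<le> integral {\<alpha>..\<beta>} (\<lambda>s. e * norm (M' s))"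
  proof (rule integral_norm_bound_integral)
    show "(\<lambda>s. h (M' s) (Y \<alpha> - Y s)) integrable_on {\<alpha>..\<beta>}"
      by (intro integrable_continuous_real h.continuous_on continuous_intros
          continuous_on_subset[OF M'_cont sub] continuous_on_subset[OF by_parts_continuous(2) sub])
    show "norm (h (M' s) (Y \<alpha> - Y s)) \<le> e * norm (M' s)" if "s \<in> {\<alpha>..\<beta>}" for s
      using K[of "M' s" "Y \<alpha> - Y s"] mult_left_mono[OF conjunct1[OF close[OF that]], of "norm (M' s)"]
      by (simp add: algebra_simps)
    show "(\<lambda>s. e * norm (M' s)) integrable_on {\<alpha>..\<beta>}"
      using integrable_on_cmult_left[OF int_M', of e] by simp
  qed
  have le2: "norm (integral {\<alpha>..\<beta>} (\<lambda>s. h (M \<beta> - M s) (g s))) \<le> integral {\<alpha>..\<beta>} (\<lambda>s. e * norm (g s))"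
  proof (rule integral_norm_bound_integral)
    have "continuous_on {\<alpha>..\<beta>} (\<lambda>s. M \<beta> - M s)"
      by (intro continuous_intros continuous_on_subset[OF by_parts_continuous(1) sub])
    then show "(\<lambda>s. h (M \<beta> - M s) (g s)) integrable_on {\<alpha>..\<beta>}"
      using absolutely_integrable_bounded_bilinear_continuous[OF h _ g_sub] by (simp add: absolutely_integrable_on_def)
    show "norm (h (M \<beta> - M s) (g s)) \<le> e * norm (g s)" if "s \<in> {\<alpha>..\<beta>}" for s
      using K[of "M \<beta> - M s" "g s"] mult_left_mono[OF conjunct2[OF close[OF that]], of "norm (g s)"]
      by (simp add: algebra_simps)
    show "(\<lambda>s. e * norm (g s)) integrable_on {\<alpha>..\<beta>}"
      using integrable_on_cmult_left[OF int_g, of e] by simp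
  qed
  have "integral {\<alpha>..\<beta>} (\<lambda>s. e * norm (M' s)) + integral {\<alpha>..\<beta>} (\<lambda>s. e * norm (g s))
      = e * integral {\<alpha>..\<beta>} (\<lambda>s. norm (M' s) + norm (g s))"
    using int_M' int_g by (simp add: integral_add integral_mult_right distrib_left)
  then show ?thesis
    unfolding by_parts_defect_increment[OF ab] using norm_triangle_le[OF add_mono[OF le1 le2]] by simp
qed

lemma by_parts_defect_increment_small:
  assumes "e > 0"
  obtains \<delta> where "\<delta> > 0"
    and "\<And>\<alpha> \<beta>. c \<le> \<alpha> \<Longrightarrow> \<alpha> \<le> \<beta> \<Longrightarrow> \<beta> \<le> d \<Longrightarrow> \<beta> - \<alpha> < \<delta> \<Longrightarrow>
      norm (by_parts_defect \<beta> - by_parts_defect \<alpha>) \<le> e * integral {\<alpha>..\<beta>} (\<lambda>s. norm (M' s) + norm (g s))"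
proof -
  obtain K where K: "\<And>x y. norm (h x y) \<le> norm x * norm y * K" "K > 0"
    using bounded_bilinear.pos_bounded[OF h] by blast
  obtain \<delta>1 \<delta>2 where "\<delta>1 > 0" and Y_close: "\<forall>s\<in>{c..d}. \<forall>s'\<in>{c..d}. dist s' s < \<delta>1 \<longrightarrow> dist (Y s') (Y s) < e / K"
    and "\<delta>2 > 0" and M_close: "\<forall>s\<in>{c..d}. \<forall>s'\<in>{c..d}. dist s' s < \<delta>2 \<longrightarrow> dist (M s') (M s) < e / K"
    using compact_uniformly_continuous[OF by_parts_continuous(2) compact_Icc]
      compact_uniformly_continuous[OF by_parts_continuous(1) compact_Icc] \<open>e > 0\<close> K(2)
    unfolding uniformly_continuous_on_def by (metis divide_pos_pos)
  have "norm (by_parts_defect \<beta> - by_parts_defect \<alpha>) \<le> e * integral {\<alpha>..\<beta>} (\<lambda>s. norm (M' s) + norm (g s))"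
    if ab: "c \<le> \<alpha>" "\<alpha> \<le> \<beta>" "\<beta> \<le> d" "\<beta> - \<alpha> < min \<delta>1 \<delta>2" for \<alpha> \<beta>
  proof (rule norm_by_parts_defect_increment_le[OF ab(1-3) K(1)])
    fix s assume "s \<in> {\<alpha>..\<beta>}"
    then have "dist (Y \<alpha>) (Y s) < e / K" "dist (M \<beta>) (M s) < e / K"
      using Y_close[rule_format, of s \<alpha>] M_close[rule_format, of s \<beta>] ab by (auto simp: dist_real_def)
    then show "norm (Y \<alpha> - Y s) * K \<le> e \<and> norm (M \<beta> - M s) * K \<le> e"
      using K(2) by (simp add: dist_norm pos_less_divide_eq less_imp_le)
  qed
  moreover have "min \<delta>1 \<delta>2 > 0"
    using \<open>\<delta>1 > 0\<close> \<open>\<delta>2 > 0\<close> by simp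
  ultimately show thesis
    using that by blast
qed

lemma by_parts_defect_eq_0:
  assumes "c \<le> d"
  shows "by_parts_defect d = 0"
proof -
  define Q where "Q = integral {c..d} (\<lambda>s. norm (M' s) + norm (g s))"
  have int_F: "(\<lambda>s. norm (M' s) + norm (g s)) integrable_on {c..d}"
    using g integrable_add[OF integrable_continuous_real[OF continuous_on_norm[OF M'_cont]]]
    by (simp add: absolutely_integrable_on_def)
  have small: "norm (by_parts_defect d) \<le> e * Q" if e: "e > 0" for e
  proof -
    obtain \<delta> where "\<delta> > 0" and \<delta>: "\<And>\<alpha> \<beta>. c \<le> \<alpha> \<Longrightarrow> \<alpha> \<le> \<beta> \<Longrightarrow> \<beta> \<le> d \<Longrightarrow> \<beta> - \<alpha> < \<delta> \<Longrightarrow>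
        norm (by_parts_defect \<beta> - by_parts_defect \<alpha>) \<le> e * integral {\<alpha>..\<beta>} (\<lambda>s. norm (M' s) + norm (g s))"
      using by_parts_defect_increment_small[OF e] by blast
    have "norm (by_parts_defect d - by_parts_defect c)
        \<le> e * integral {c..d} (\<lambda>s. norm (M' s) + norm (g s)) - e * integral {c..c} (\<lambda>s. norm (M' s) + norm (g s))"
    proof (rule norm_diff_le_if_locally_le[OF assms \<open>\<delta> > 0\<close>])
      fix \<alpha> \<beta> assume ab: "c \<le> \<alpha>" "\<alpha> \<le> \<beta>" "\<beta> \<le> d" "\<beta> - \<alpha> < \<delta>"
      have "integral {c..\<beta>} (\<lambda>s. norm (M' s) + norm (g s)) = integral {c..\<alpha>} (\<lambda>s. norm (M' s) + norm (g s))
          + integral {\<alpha>..\<beta>} (\<lambda>s. norm (M' s) + norm (g s))"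
        using ab by (intro Henstock_Kurzweil_Integration.integral_combine[symmetric] integrable_on_subinterval[OF int_F]) auto
      then show "norm (by_parts_defect \<beta> - by_parts_defect \<alpha>)
          \<le> e * integral {c..\<beta>} (\<lambda>s. norm (M' s) + norm (g s)) - e * integral {c..\<alpha>} (\<lambda>s. norm (M' s) + norm (g s))"
        using \<delta>[OF ab] by (simp add: algebra_simps)
    qed
    then show ?thesis
      by (simp add: by_parts_defect_def Q_def)
  qed
  have "Q \<ge> 0"
    unfolding Q_def by (rule integral_nonneg[OF int_F]) auto
  have "norm (by_parts_defect d) \<le> 0"
  proof (rule field_le_epsilon)
    fix \<epsilon> :: real assume "\<epsilon> > 0"
    have "norm (by_parts_defect d) \<le> \<epsilon> / (Q + 1) * Q"
      using small[of "\<epsilon> / (Q + 1)"] \<open>\<epsilon> > 0\<close> \<open>Q \<ge> 0\<close> by simp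
    also have "\<dots> \<le> 0 + \<epsilon>"
      using \<open>\<epsilon> > 0\<close> \<open>Q \<ge> 0\<close> by (simp add: field_simps)
    finally show "norm (by_parts_defect d) \<le> 0 + \<epsilon>" .
  qed
  then show ?thesis by simp
qed

lemma integration_by_parts_absolutely_continuous:
  assumes "c \<le> d"
  shows "integral {c..d} (\<lambda>s. h (M' s) (Y s)) = h (M d) (Y d) - h (M c) (Y c) - integral {c..d} (\<lambda>s. h (M s) (g s))"
  using by_parts_defect_eq_0[OF assms] by (simp add: by_parts_defect_def algebra_simps)

end

section \<open>Gram matrices\<close>

lemma integral_gram_mult:
  fixes K :: "real \<Rightarrow> real^'m^'n"
  assumes "continuous_on {c..d} K"
  shows "integral {c..d} (\<lambda>s. K s *v (transpose (K s) *v p)) = integral {c..d} (\<lambda>s. K s ** transpose (K s)) *v p"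
proof -
  have "integral {c..d} ((\<lambda>X. X *v p) \<circ> (\<lambda>s. K s ** transpose (K s))) = integral {c..d} (\<lambda>s. K s ** transpose (K s)) *v p"
    using assms
    by (intro integral_linear integrable_continuous_real continuous_intros
        bounded_bilinear.bounded_linear_left[OF bounded_bilinear_matrix_vector_mult])
  then show ?thesis
    by (simp add: o_def matrix_vector_mul_assoc del: transpose_matrix_vector)
qed

lemma inner_integral_gram:
  fixes K :: "real \<Rightarrow> real^'m^'n"
  assumes "continuous_on {c..d} K"
  shows "p \<bullet> (integral {c..d} (\<lambda>s. K s ** transpose (K s)) *v p) = integral {c..d} (\<lambda>s. norm (transpose (K s) *v p) ^ 2)"
proof -
  have "p \<bullet> (K s *v (transpose (K s) *v p)) = norm (transpose (K s) *v p) ^ 2" for s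
    by (simp add: power2_norm_eq_inner dot_lmul_matrix[symmetric])
  moreover have "(\<lambda>s. K s *v (transpose (K s) *v p)) integrable_on {c..d}"
    by (intro integrable_continuous_real continuous_intros assms)
  ultimately have "integral {c..d} (\<lambda>s. norm (transpose (K s) *v p) ^ 2) = p \<bullet> integral {c..d} (\<lambda>s. K s *v (transpose (K s) *v p))"
    using integral_linear[OF _ bounded_linear_inner_right, of "\<lambda>s. K s *v (transpose (K s) *v p)" "{c..d}" p]
    by (simp add: o_def del: transpose_matrix_vector)
  then show ?thesis
    by (simp add: integral_gram_mult[OF assms] del: transpose_matrix_vector)
qed

lemma invertible_integral_gram:
  fixes K :: "real \<Rightarrow> real^'n^'n"
  assumes "c < d" and K: "continuous_on {c..d} K" and "invertible (K c)"
  shows "invertible (integral {c..d} (\<lambda>s. K s ** transpose (K s)))"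
proof -
  have "p = 0" if p: "integral {c..d} (\<lambda>s. K s ** transpose (K s)) *v p = 0" for p
  proof -
    have cont: "continuous_on {c..d} (\<lambda>s. norm (transpose (K s) *v p) ^ 2)"
      by (intro continuous_intros K)
    have "((\<lambda>s. norm (transpose (K s) *v p) ^ 2) has_integral 0) {c..d}"
      using inner_integral_gram[OF K, of p] p integrable_integral[OF integrable_continuous_real[OF cont]]
      by simp
    then have "norm (transpose (K c) *v p) ^ 2 = 0"
      using \<open>c < d\<close> cont by (intro has_integral_0_cbox_imp_0[of c d]) auto
    then have "transpose (K c) *v p = 0"
      by simp
    then show "p = 0"
      using transpose_invertible[OF \<open>invertible (K c)\<close>]
      by (metis matrix_inv_left matrix_vector_mul_assoc matrix_vector_mul_lid matrix_vector_mult_0_right)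
  qed
  then show ?thesis
    using matrix_left_invertible_ker invertible_left_inverse by blast
qed

text \<open>\<open>w\<close> and \<open>w0\<close> satisfy the same moment equation, which makes \<open>w0\<close> orthogonal to
  \<open>w - w0\<close> in \<open>L\<^sup>2\<close>.\<close>

lemma integral_inner_self_moment_split:
  fixes K :: "real \<Rightarrow> real^'n^'m" and w :: "real \<Rightarrow> real^'n" and p :: "real^'m"
  defines "w0 \<equiv> \<lambda>s. transpose (K s) *v p"
  assumes K: "continuous_on {c..d} K"
    and w: "w absolutely_integrable_on {c..d}" "(\<lambda>s. w s \<bullet> w s) integrable_on {c..d}"
    and moment: "integral {c..d} (\<lambda>s. K s *v w s) = integral {c..d} (\<lambda>s. K s ** transpose (K s)) *v p"
  shows "(\<lambda>s. (w s - w0 s) \<bullet> (w s - w0 s)) integrable_on {c..d}"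
    and "integral {c..d} (\<lambda>s. w s \<bullet> w s) =
      integral {c..d} (\<lambda>s. w0 s \<bullet> w0 s) + integral {c..d} (\<lambda>s. (w s - w0 s) \<bullet> (w s - w0 s))"
proof -
  have cross: "w0 s \<bullet> w s = p \<bullet> (K s *v w s)" for s
    by (simp add: w0_def dot_lmul_matrix)
  have int_Kw: "(\<lambda>s. K s *v w s) integrable_on {c..d}"
    using absolutely_integrable_bounded_bilinear_continuous[OF bounded_bilinear_matrix_vector_mult K w(1)]
    by (simp add: absolutely_integrable_on_def)
  have int_cross: "(\<lambda>s. w0 s \<bullet> w s) integrable_on {c..d}"
    unfolding cross using integrable_linear[OF int_Kw bounded_linear_inner_right] by (simp add: o_def)
  have int_w0: "(\<lambda>s. w0 s \<bullet> w0 s) integrable_on {c..d}"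
    unfolding w0_def by (intro integrable_continuous_real continuous_intros K)
  have "integral {c..d} (\<lambda>s. w0 s \<bullet> w s) = p \<bullet> integral {c..d} (\<lambda>s. K s *v w s)"
    unfolding cross using integral_linear[OF int_Kw bounded_linear_inner_right] by (simp add: o_def)
  also have "\<dots> = integral {c..d} (\<lambda>s. w0 s \<bullet> w0 s)"
    unfolding moment inner_integral_gram[OF K] by (simp add: w0_def power2_norm_eq_inner)
  finally have cross_eq: "integral {c..d} (\<lambda>s. w0 s \<bullet> w s) = integral {c..d} (\<lambda>s. w0 s \<bullet> w0 s)" .
  have expand: "(w s - w0 s) \<bullet> (w s - w0 s) = w s \<bullet> w s - 2 * (w0 s \<bullet> w s) + w0 s \<bullet> w0 s" for s
    by (simp add: inner_diff_left inner_diff_right inner_commute)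
  have int_cross2: "(\<lambda>s. 2 * (w0 s \<bullet> w s)) integrable_on {c..d}"
    using integrable_on_cmult_left[OF int_cross, of 2] by simp
  show "(\<lambda>s. (w s - w0 s) \<bullet> (w s - w0 s)) integrable_on {c..d}"
    unfolding expand by (intro integrable_add integrable_diff w(2) int_cross2 int_w0)
  have "integral {c..d} (\<lambda>s. (w s - w0 s) \<bullet> (w s - w0 s))
      = integral {c..d} (\<lambda>s. w s \<bullet> w s) - 2 * integral {c..d} (\<lambda>s. w0 s \<bullet> w s) + integral {c..d} (\<lambda>s. w0 s \<bullet> w0 s)"
    unfolding expand
    by (simp add: integral_add integral_diff integrable_diff w(2) int_cross int_cross2 int_w0)
  then show "integral {c..d} (\<lambda>s. w s \<bullet> w s) =
      integral {c..d} (\<lambda>s. w0 s \<bullet> w0 s) + integral {c..d} (\<lambda>s. (w s - w0 s) \<bullet> (w s - w0 s))"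
    by (simp add: cross_eq)
qed

section \<open>Integral solutions and variation of constants\<close>

definition integral_solution ::
  "(real \<Rightarrow> real^'n^'n) \<Rightarrow> (real \<Rightarrow> real^'n) \<Rightarrow> real \<Rightarrow> real \<Rightarrow> (real \<Rightarrow> real^'n) \<Rightarrow> bool" where
  "integral_solution A w c d x \<longleftrightarrow>
     (\<lambda>s. A s *v x s + w s) absolutely_integrable_on {c..d} \<and>
     (\<forall>\<tau>\<in>{c..d}. x \<tau> = x c + integral {c..\<tau>} (\<lambda>s. A s *v x s + w s))"

lemma admissible_iff_integral_solution:
  "admissible A B c d x u \<longleftrightarrow>
     u measurable_on {c..d} \<and> (\<lambda>s. (B s *v u s) \<bullet> (B s *v u s)) integrable_on {c..d} \<and>
     integral_solution A (\<lambda>s. B s *v u s) c d x"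
  by (simp only: admissible_def integral_solution_def conj_assoc)

lemma integral_solutionD:
  assumes "integral_solution A w c d x"
  shows "(\<lambda>s. A s *v x s + w s) absolutely_integrable_on {c..d}"
    and "\<And>\<tau>. \<tau> \<in> {c..d} \<Longrightarrow> x \<tau> = x c + integral {c..\<tau>} (\<lambda>s. A s *v x s + w s)"
  using assms unfolding integral_solution_def by blast+

lemma integral_solution_continuous:
  assumes "integral_solution A w c d x"
  shows "continuous_on {c..d} x"
proof -
  have "continuous_on {c..d} (\<lambda>\<tau>. x c + integral {c..\<tau>} (\<lambda>s. A s *v x s + w s))"
    using integral_solutionD(1)[OF assms] unfolding absolutely_integrable_on_def
    by (intro continuous_intros indefinite_integral_continuous_1) auto
  then show ?thesis
    by (rule continuous_on_eq) (rule integral_solutionD(2)[OF assms, symmetric])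
qed

lemma integral_solution_forcing_absolutely_integrable:
  assumes "integral_solution A w c d x" and "continuous_on {c..d} A"
  shows "w absolutely_integrable_on {c..d}"
proof -
  have "continuous_on {c..d} (\<lambda>s. A s *v x s)"
    by (intro continuous_intros assms(2) integral_solution_continuous[OF assms(1)])
  then have "(\<lambda>s. (A s *v x s + w s) - A s *v x s) absolutely_integrable_on {c..d}"
    by (intro set_integral_diff(1) integral_solutionD(1)[OF assms(1)] absolutely_integrable_continuous_real)
  then show ?thesis by simp
qed

lemma integral_solution_subinterval:
  assumes "integral_solution A w a b x" and "a \<le> c" "c \<le> d" "d \<le> b"
  shows "integral_solution A w c d x"
  unfolding integral_solution_def
proof (intro conjI ballI)
  let ?f = "\<lambda>s. A s *v x s + w s"
  note f = integral_solutionD(1)[OF assms(1)] and x = integral_solutionD(2)[OF assms(1)]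
  show "?f absolutely_integrable_on {c..d}"
    using absolutely_integrable_on_subinterval[OF f] assms(2-4) by auto
  fix \<tau> assume "\<tau> \<in> {c..d}"
  then have "integral {a..c} ?f + integral {c..\<tau>} ?f = integral {a..\<tau>} ?f"
    using assms(2-4) f integrable_on_subinterval[of ?f "{a..b}" a \<tau>]
    by (intro Henstock_Kurzweil_Integration.integral_combine) (auto simp: absolutely_integrable_on_def)
  moreover have "x \<tau> = x a + integral {a..\<tau>} ?f" "x c = x a + integral {a..c} ?f"
    using x[of \<tau>] x[of c] \<open>\<tau> \<in> {c..d}\<close> assms(2-4) by auto
  ultimately show "x \<tau> = x c + integral {c..\<tau>} ?f"
    by (simp add: algebra_simps)
qed

lemma integral_solution_unique:
  assumes x: "integral_solution A w c d x" and y: "integral_solution A w c d y"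
    and A: "continuous_on {c..d} A" and "x c = y c" and "\<tau> \<in> {c..d}"
  shows "x \<tau> = y \<tau>"
proof -
  define z where "z t = x t - y t" for t
  have z_cont: "continuous_on {c..d} (\<lambda>s. A s *v z s)"
    unfolding z_def
    by (intro continuous_intros A integral_solution_continuous[OF x] integral_solution_continuous[OF y])
  have z: "z t = integral {c..t} (\<lambda>s. A s *v z s)" if "t \<in> {c..d}" for t
  proof -
    have "z t = integral {c..t} (\<lambda>s. A s *v x s + w s) - integral {c..t} (\<lambda>s. A s *v y s + w s)"
      using integral_solutionD(2)[OF x that] integral_solutionD(2)[OF y that] \<open>x c = y c\<close> by (simp add: z_def)
    also have "\<dots> = integral {c..t} (\<lambda>s. (A s *v x s + w s) - (A s *v y s + w s))"
      using integral_solutionD(1)[OF x] integral_solutionD(1)[OF y] that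
        integrable_on_subinterval[of _ "{c..d}" c t]
      by (intro integral_diff[symmetric]) (auto simp: absolutely_integrable_on_def)
    finally show ?thesis
      by (simp add: z_def matrix_vector_mult_diff_distrib)
  qed
  have "z \<tau> = 0"
  proof (rule bounded_bilinear_ode_zero_unique[OF bounded_bilinear_matrix_vector_mult A _ _ _ \<open>\<tau> \<in> {c..d}\<close>])
    show "c \<in> {c..d}" "z c = 0"
      using z[of c] \<open>\<tau> \<in> {c..d}\<close> by auto
    fix t assume "t \<in> {c..d}"
    then show "(z has_vector_derivative A t *v z t) (at t within {c..d})"
      using has_vector_derivative_transform[OF _ z integral_has_vector_derivative[OF z_cont]] by blast
  qed
  then show ?thesis by (simp add: z_def)
qed

locale linear_system =
  fixes A :: "real \<Rightarrow> real^'n^'n" and a b :: real and \<Phi> :: "real \<Rightarrow> real \<Rightarrow> real^'n^'n"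
  assumes state_transition: "state_transition A a b \<Phi>"
    and continuous_A: "continuous_on {a..b} A"
begin

lemma transition_self: "s \<in> {a..b} \<Longrightarrow> \<Phi> s s = mat 1"
  using state_transition unfolding state_transition_def by blast

lemma transition_has_derivative:
  "s \<in> {a..b} \<Longrightarrow> t \<in> {a..b} \<Longrightarrow> ((\<lambda>r. \<Phi> r s) has_vector_derivative A t ** \<Phi> t s) (at t within {a..b})"
  using state_transition unfolding state_transition_def by blast

lemma continuous_on_transition_left: "s \<in> {a..b} \<Longrightarrow> continuous_on {a..b} (\<lambda>r. \<Phi> r s)"
  using has_vector_derivative_continuous[OF transition_has_derivative]
  by (auto simp: continuous_on_eq_continuous_within)

lemma transition_mult:
  assumes "r \<in> {a..b}" "s \<in> {a..b}" "q \<in> {a..b}"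
  shows "\<Phi> r s ** \<Phi> s q = \<Phi> r q"
proof -
  define y where "y r = \<Phi> r s ** \<Phi> s q - \<Phi> r q" for r
  have "y r = 0"
  proof (rule bounded_bilinear_ode_zero_unique[OF bounded_bilinear_matrix_matrix_mult continuous_A _ assms(2) _ assms(1)])
    show "y s = 0"
      using transition_self[OF assms(2)] by (simp add: y_def)
    fix t assume t: "t \<in> {a..b}"
    have "((\<lambda>r. \<Phi> r s ** \<Phi> s q) has_vector_derivative (A t ** \<Phi> t s) ** \<Phi> s q) (at t within {a..b})"
      using bounded_bilinear.has_vector_derivative[OF bounded_bilinear_matrix_matrix_mult
          transition_has_derivative[OF assms(2) t] has_vector_derivative_const]
      by simp
    then have "(y has_vector_derivative (A t ** \<Phi> t s) ** \<Phi> s q - A t ** \<Phi> t q) (at t within {a..b})"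
      unfolding y_def by (rule has_vector_derivative_diff[OF _ transition_has_derivative[OF assms(3) t]])
    then show "(y has_vector_derivative A t ** y t) (at t within {a..b})"
      by (simp add: y_def matrix_mul_assoc bounded_bilinear.diff_right[OF bounded_bilinear_matrix_matrix_mult])
  qed
  then show ?thesis by (simp add: y_def)
qed

lemma transition_inverse: "r \<in> {a..b} \<Longrightarrow> s \<in> {a..b} \<Longrightarrow> \<Phi> r s ** \<Phi> s r = mat 1"
  using transition_mult transition_self by auto

lemma continuous_on_transition_right:
  assumes "q \<in> {a..b}"
  shows "continuous_on {a..b} (\<lambda>s. \<Phi> q s)"
proof -
  have "a \<in> {a..b}"
    using assms by auto
  have eq: "\<Phi> q a ** matrix_inv (\<Phi> s a) = \<Phi> q s" if "s \<in> {a..b}" for s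
    using transition_mult[OF assms \<open>a \<in> {a..b}\<close> that] matrix_inv_eq[OF transition_inverse[OF that \<open>a \<in> {a..b}\<close>]]
    by simp
  have "continuous_on {a..b} (\<lambda>s. \<Phi> q a ** matrix_inv (\<Phi> s a))"
    using transition_inverse \<open>a \<in> {a..b}\<close> invertible_def matrix_left_right_inverse
    by (intro continuous_intros continuous_on_matrix_inv continuous_on_transition_left) blast+
  then show ?thesis
    by (rule continuous_on_eq) (rule eq)
qed

lemma transition_cancel:
  assumes "r \<in> {a..b}" "s \<in> {a..b}" "\<Phi> r s *v x = \<Phi> r s *v y"
  shows "x = y"
  using arg_cong[OF assms(3), of "(*v) (\<Phi> s r)"] transition_inverse[OF assms(2,1)]
  by (simp add: matrix_vector_mul_assoc)

lemma transition_mult_integral_gram: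
  assumes "a \<le> c" "c \<le> t" "t \<le> b"
  shows "\<Phi> t c ** integral {c..t} (\<lambda>s. \<Phi> c s ** transpose (\<Phi> c s))
    = integral {c..t} (\<lambda>s. \<Phi> t s ** transpose (\<Phi> c s))"
proof -
  have sub: "{c..t} \<subseteq> {a..b}" and c: "c \<in> {a..b}"
    using assms by auto
  have "(\<lambda>s. \<Phi> c s ** transpose (\<Phi> c s)) integrable_on {c..t}"
    by (intro integrable_continuous_real continuous_intros continuous_on_subset[OF continuous_on_transition_right[OF c] sub])
  from integral_linear[OF this bounded_bilinear.bounded_linear_right[OF bounded_bilinear_matrix_matrix_mult]]
  have "\<Phi> t c ** integral {c..t} (\<lambda>s. \<Phi> c s ** transpose (\<Phi> c s))
      = integral {c..t} (\<lambda>s. \<Phi> t c ** (\<Phi> c s ** transpose (\<Phi> c s)))"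
    unfolding o_def by (rule sym)
  also have "\<dots> = integral {c..t} (\<lambda>s. \<Phi> t s ** transpose (\<Phi> c s))"
    using transition_mult[of t c] assms sub by (intro integral_cong) (auto simp: matrix_mul_assoc)
  finally show ?thesis .
qed

lemma integral_by_parts_transition:
  assumes "a \<le> c" "c \<le> \<tau>" "\<tau> \<le> b" and g: "g absolutely_integrable_on {c..\<tau>}"
  shows "integral {c..\<tau>} (\<lambda>r. A r *v (\<Phi> r c *v (y0 + integral {c..r} g)))
    = \<Phi> \<tau> c *v (y0 + integral {c..\<tau>} g) - y0 - integral {c..\<tau>} (\<lambda>r. \<Phi> r c *v g r)"
proof -
  have sub: "{c..\<tau>} \<subseteq> {a..b}" and c: "c \<in> {a..b}"
    using assms by auto
  have "integral {c..\<tau>} (\<lambda>r. (A r ** \<Phi> r c) *v (y0 + integral {c..r} g))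
      = \<Phi> \<tau> c *v (y0 + integral {c..\<tau>} g) - \<Phi> c c *v (y0 + integral {c..c} g) - integral {c..\<tau>} (\<lambda>r. \<Phi> r c *v g r)"
  proof (rule integration_by_parts_absolutely_continuous[OF bounded_bilinear_matrix_vector_mult _ _ g])
    show "((\<lambda>r. \<Phi> r c) has_vector_derivative A t ** \<Phi> t c) (at t within {c..\<tau>})" if "t \<in> {c..\<tau>}" for t
      using has_vector_derivative_within_subset[OF transition_has_derivative[OF c] sub] that sub by auto
    show "continuous_on {c..\<tau>} (\<lambda>t. A t ** \<Phi> t c)"
      by (intro continuous_intros continuous_on_subset[OF continuous_A sub]
          continuous_on_subset[OF continuous_on_transition_left[OF c] sub])
  qed (use assms in auto)
  then show ?thesis
    using transition_self[OF c] by (simp add: matrix_vector_mul_assoc)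
qed

lemma integral_solution_variation_of_constants:
  assumes "a \<le> c" "c \<le> d" "d \<le> b" and w: "w absolutely_integrable_on {c..d}"
  shows "integral_solution A w c d (\<lambda>\<tau>. \<Phi> \<tau> c *v (y0 + integral {c..\<tau>} (\<lambda>s. \<Phi> c s *v w s)))"
proof -
  define X where "X \<tau> = \<Phi> \<tau> c *v (y0 + integral {c..\<tau>} (\<lambda>s. \<Phi> c s *v w s))" for \<tau>
  have sub: "{c..d} \<subseteq> {a..b}" and c: "c \<in> {a..b}"
    using assms by auto
  have g: "(\<lambda>s. \<Phi> c s *v w s) absolutely_integrable_on {c..d}"
    by (intro absolutely_integrable_bounded_bilinear_continuous[OF bounded_bilinear_matrix_vector_mult _ w]
        continuous_on_subset[OF continuous_on_transition_right[OF c] sub])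
  have AX_cont: "continuous_on {c..d} (\<lambda>s. A s *v X s)"
    unfolding X_def using g
    by (intro continuous_intros indefinite_integral_continuous_1 continuous_on_subset[OF continuous_A sub]
        continuous_on_subset[OF continuous_on_transition_left[OF c] sub]) (simp add: absolutely_integrable_on_def)
  have "X \<tau> = y0 + integral {c..\<tau>} (\<lambda>s. A s *v X s + w s)" if \<tau>: "\<tau> \<in> {c..d}" for \<tau>
  proof -
    have "integral {c..\<tau>} (\<lambda>s. A s *v X s + w s) = integral {c..\<tau>} (\<lambda>s. A s *v X s) + integral {c..\<tau>} w"
    proof (rule integral_add)
      show "(\<lambda>s. A s *v X s) integrable_on {c..\<tau>}"
        using \<tau> by (intro integrable_continuous_real continuous_on_subset[OF AX_cont]) auto
      show "w integrable_on {c..\<tau>}"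
        using w \<tau> integrable_on_subinterval[of w "{c..d}" c \<tau>] by (auto simp: absolutely_integrable_on_def)
    qed
    also have "integral {c..\<tau>} (\<lambda>s. A s *v X s) = X \<tau> - y0 - integral {c..\<tau>} (\<lambda>r. \<Phi> r c *v (\<Phi> c r *v w r))"
      unfolding X_def using assms \<tau> absolutely_integrable_on_subinterval[OF g, of c \<tau>]
      by (intro integral_by_parts_transition) auto
    also have "integral {c..\<tau>} (\<lambda>r. \<Phi> r c *v (\<Phi> c r *v w r)) = integral {c..\<tau>} w"
      using transition_inverse[of _ c] \<tau> sub c by (intro integral_cong) (auto simp: matrix_vector_mul_assoc)
    finally show ?thesis
      by simp
  qed
  moreover have "X c = y0"
    using transition_self[OF c] by (simp add: X_def)
  moreover have "(\<lambda>s. A s *v X s + w s) absolutely_integrable_on {c..d}"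
    by (intro set_integral_add(1) absolutely_integrable_continuous_real AX_cont w)
  ultimately show ?thesis
    by (simp add: integral_solution_def X_def)
qed

lemma integral_solution_eq_variation_of_constants:
  assumes x: "integral_solution A w c d x" and "a \<le> c" "d \<le> b" "\<tau> \<in> {c..d}"
  shows "x \<tau> = \<Phi> \<tau> c *v (x c + integral {c..\<tau>} (\<lambda>s. \<Phi> c s *v w s))"
proof (rule integral_solution_unique[OF x _ _ _ \<open>\<tau> \<in> {c..d}\<close>])
  have "continuous_on {c..d} A"
    using continuous_on_subset[OF continuous_A] assms by auto
  then show "integral_solution A w c d (\<lambda>\<tau>. \<Phi> \<tau> c *v (x c + integral {c..\<tau>} (\<lambda>s. \<Phi> c s *v w s)))"
    using assms integral_solution_forcing_absolutely_integrable[OF x]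
    by (intro integral_solution_variation_of_constants) auto
  show "x c = \<Phi> c c *v (x c + integral {c..c} (\<lambda>s. \<Phi> c s *v w s))"
    using transition_self assms by auto
qed (use assms continuous_on_subset[OF continuous_A] in auto)

lemma integral_solution_transfer:
  assumes x: "integral_solution A w c d x" and "a \<le> c" "c \<le> d" "d \<le> b"
  shows "integral {c..d} (\<lambda>s. \<Phi> c s *v w s) = \<Phi> c d *v x d - x c"
proof -
  have "\<Phi> c d *v x d = (\<Phi> c d ** \<Phi> d c) *v (x c + integral {c..d} (\<lambda>s. \<Phi> c s *v w s))"
    using integral_solution_eq_variation_of_constants[OF x, of d] assms by (simp add: matrix_vector_mul_assoc)
  also have "\<dots> = x c + integral {c..d} (\<lambda>s. \<Phi> c s *v w s)"
    using transition_inverse assms by simp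
  finally show ?thesis by simp
qed

end

section \<open>The minimum-energy interpolation problem\<close>

locale min_energy_interpolation = linear_system A a b \<Phi>
  for A :: "real \<Rightarrow> real^'n^'n" and a b \<Phi> +
  fixes B :: "real \<Rightarrow> real^'n^'n" and m :: nat and tp :: "nat \<Rightarrow> real" and xs :: "nat \<Rightarrow> real^'n"
  assumes m_pos: "m \<ge> 1" and tp_0: "tp 0 = a" and tp_m: "tp m = b"
    and tp_less: "\<And>i. i < m \<Longrightarrow> tp i < tp (Suc i)"
    and invertible_B: "\<And>t. t \<in> {a..b} \<Longrightarrow> invertible (B t)"
    and continuous_B: "continuous_on {a..b} B"
begin

lemma tp_le: "i \<le> j \<Longrightarrow> j \<le> m \<Longrightarrow> tp i \<le> tp j"
  using consecutive_le[of m tp i j] tp_less less_imp_le by blast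

lemma tp_bounds: "i \<le> m \<Longrightarrow> a \<le> tp i" "i \<le> m \<Longrightarrow> tp i \<le> b"
  using tp_le[of 0 i] tp_le[of i m] tp_0 tp_m by auto

lemma segment_subset: "i < m \<Longrightarrow> {tp i..tp (Suc i)} \<subseteq> {a..b}"
  using tp_bounds[of i] tp_bounds[of "Suc i"] by auto

lemma integrable_on_piecewise:
  fixes g :: "real \<Rightarrow> 'a::banach"
  assumes "\<And>i. i < m \<Longrightarrow> f i integrable_on {tp i..tp (Suc i)}"
    and "\<And>i t. i < m \<Longrightarrow> t \<in> {tp i..<tp (Suc i)} \<Longrightarrow> g t = f i t"
  shows "g integrable_on {a..b}"
proof -
  have "g integrable_on {tp i..tp (Suc i)}" if "i < m" for i
    by (rule integrable_spike_finite[of "{tp (Suc i)}", OF _ _ assms(1)[OF that]]) (use assms(2)[OF that] in auto)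
  then have "g integrable_on {tp 0..tp m}"
    using tp_less by (intro integrable_on_consecutive_intervals) (auto intro: less_imp_le)
  then show ?thesis
    by (simp add: tp_0 tp_m)
qed

lemma absolutely_integrable_on_piecewise:
  fixes g :: "real \<Rightarrow> 'a::euclidean_space"
  assumes "\<And>i. i < m \<Longrightarrow> continuous_on {tp i..tp (Suc i)} (f i)"
    and "\<And>i t. i < m \<Longrightarrow> t \<in> {tp i..<tp (Suc i)} \<Longrightarrow> g t = f i t"
  shows "g absolutely_integrable_on {a..b}"
proof (rule absolutely_integrable_onI)
  show "g integrable_on {a..b}"
    by (rule integrable_on_piecewise[of f]) (use assms in \<open>auto intro: integrable_continuous_real\<close>)
  show "(\<lambda>t. norm (g t)) integrable_on {a..b}"
    by (rule integrable_on_piecewise[of "\<lambda>i t. norm (f i t)"])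
      (use assms in \<open>auto intro: integrable_continuous_real continuous_on_norm\<close>)
qed

text \<open>\<open>gram i\<close> and \<open>moment i\<close> are the paper's \<open>S\<close> and \<open>v\<close> on the \<open>i\<close>-th segment, and
  \<open>opt_forcing i\<close> is the optimal \<open>B u\<close> there.\<close>

definition gram :: "nat \<Rightarrow> real^'n^'n" where
  "gram i = integral {tp i..tp (Suc i)} (\<lambda>s. \<Phi> (tp i) s ** transpose (\<Phi> (tp i) s))"

definition moment :: "nat \<Rightarrow> real^'n" where
  "moment i = \<Phi> (tp i) (tp (Suc i)) *v xs (Suc i) - xs i"

definition opt_forcing :: "nat \<Rightarrow> real \<Rightarrow> real^'n" where
  "opt_forcing i s = transpose (\<Phi> (tp i) s) *v (matrix_inv (gram i) *v moment i)"

definition segment :: "real \<Rightarrow> nat" where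
  "segment t = Max {i. i < m \<and> tp i \<le> t}"

definition opt_control :: "real \<Rightarrow> real^'n" where
  "opt_control t = matrix_inv (B t) *v opt_forcing (segment t) t"

definition opt_state :: "real \<Rightarrow> real^'n" where
  "opt_state t = \<Phi> t a *v (xs 0 + integral {a..t} (\<lambda>s. \<Phi> a s *v (B s *v opt_control s)))"

lemma segment_eq:
  assumes "i < m" "t \<in> {tp i..<tp (Suc i)}"
  shows "segment t = i"
  unfolding segment_def
proof (rule Max_eqI)
  show "j \<le> i" if "j \<in> {i. i < m \<and> tp i \<le> t}" for j
    using that assms tp_le[of "Suc i" j] by (cases "j \<le> i") auto
qed (use assms in auto)

lemma B_opt_control:
  assumes "i < m" "t \<in> {tp i..<tp (Suc i)}"
  shows "B t *v opt_control t = opt_forcing i t"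
proof -
  have "t \<in> {a..b}"
    using assms tp_bounds[of i] tp_bounds[of "Suc i"] by auto
  then show ?thesis
    using segment_eq[OF assms] invertible_B
    by (simp add: opt_control_def matrix_vector_mul_assoc matrix_inv_right)
qed

lemma continuous_on_opt_forcing: "i < m \<Longrightarrow> continuous_on {a..b} (opt_forcing i)"
  unfolding opt_forcing_def[abs_def]
  by (intro continuous_intros continuous_on_transition_right) (simp add: tp_bounds)

lemma invertible_gram: "i < m \<Longrightarrow> invertible (gram i)"
  unfolding gram_def
  using tp_bounds[of i] tp_bounds[of "Suc i"] tp_less[of i] transition_self[of "tp i"]
  by (intro invertible_integral_gram continuous_on_subset[OF continuous_on_transition_right])
    (auto simp: invertible_def)

lemma gram_opt_forcing:
  assumes "i < m" "tp i \<le> t" "t \<le> tp (Suc i)"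
  shows "integral {tp i..t} (\<lambda>s. \<Phi> (tp i) s *v opt_forcing i s)
    = integral {tp i..t} (\<lambda>s. \<Phi> (tp i) s ** transpose (\<Phi> (tp i) s)) *v (matrix_inv (gram i) *v moment i)"
  unfolding opt_forcing_def using assms tp_bounds[of i] tp_bounds[of "Suc i"]
  by (intro integral_gram_mult continuous_on_subset[OF continuous_on_transition_right]) auto

lemma moment_opt_forcing:
  "i < m \<Longrightarrow> integral {tp i..tp (Suc i)} (\<lambda>s. \<Phi> (tp i) s *v opt_forcing i s) = moment i"
  using gram_opt_forcing[of i "tp (Suc i)"] tp_less[of i] invertible_gram[of i]
  by (simp add: gram_def[symmetric] matrix_vector_mul_assoc matrix_inv_right)

lemma absolutely_integrable_B_opt_control: "(\<lambda>s. B s *v opt_control s) absolutely_integrable_on {a..b}"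
  by (rule absolutely_integrable_on_piecewise[of opt_forcing])
    (auto intro: continuous_on_subset[OF continuous_on_opt_forcing segment_subset] B_opt_control)

lemma measurable_opt_control: "opt_control measurable_on {a..b}"
proof -
  have "continuous_on {tp i..tp (Suc i)} (\<lambda>t. matrix_inv (B t) *v opt_forcing i t)" if "i < m" for i
    using invertible_B segment_subset[OF that]
    by (intro continuous_intros continuous_on_subset[OF continuous_on_opt_forcing[OF that]]
        continuous_on_matrix_inv continuous_on_subset[OF continuous_B]) auto
  moreover have "opt_control t = matrix_inv (B t) *v opt_forcing i t" if "i < m" "t \<in> {tp i..<tp (Suc i)}" for i t
    by (simp add: opt_control_def segment_eq[OF that])
  ultimately have "opt_control absolutely_integrable_on {a..b}"
    by (rule absolutely_integrable_on_piecewise)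
  then have "opt_control \<in> borel_measurable (lebesgue_on {a..b})"
    by (intro integrable_imp_measurable) (simp add: absolutely_integrable_on_def)
  then show ?thesis
    by (simp add: measurable_on_iff_borel_measurable)
qed

lemma integral_solution_opt_state: "integral_solution A (\<lambda>s. B s *v opt_control s) a b opt_state"
  unfolding opt_state_def[abs_def]
  using tp_bounds[of 0] tp_0 absolutely_integrable_B_opt_control m_pos
  by (intro integral_solution_variation_of_constants) auto

lemma opt_state_tp: "i \<le> m \<Longrightarrow> opt_state (tp i) = xs i"
proof (induction i)
  case 0
  then show ?case
    using transition_self[of a] tp_bounds[of 0] by (simp add: opt_state_def tp_0)
next
  case (Suc i)
  then have i: "i < m" by simp
  have sol: "integral_solution A (\<lambda>s. B s *v opt_control s) (tp i) (tp (Suc i)) opt_state"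
    using integral_solution_subinterval[OF integral_solution_opt_state] tp_bounds[of i] tp_bounds[of "Suc i"] tp_less[OF i] i
    by simp
  have "\<Phi> (tp i) (tp (Suc i)) *v opt_state (tp (Suc i)) - opt_state (tp i)
      = integral {tp i..tp (Suc i)} (\<lambda>s. \<Phi> (tp i) s *v (B s *v opt_control s))"
    using integral_solution_transfer[OF sol] tp_bounds[of i] tp_bounds[of "Suc i"] tp_less[OF i] i by simp
  also have "\<dots> = integral {tp i..tp (Suc i)} (\<lambda>s. \<Phi> (tp i) s *v opt_forcing i s)"
  proof (rule integral_spike[of "{tp (Suc i)}"])
    fix s assume "s \<in> {tp i..tp (Suc i)} - {tp (Suc i)}"
    then show "\<Phi> (tp i) s *v opt_forcing i s = \<Phi> (tp i) s *v (B s *v opt_control s)"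
      using B_opt_control[OF i, of s] by simp
  qed simp
  also have "\<dots> = \<Phi> (tp i) (tp (Suc i)) *v xs (Suc i) - xs i"
    by (simp add: moment_opt_forcing[OF i] moment_def)
  finally have eq: "\<Phi> (tp i) (tp (Suc i)) *v opt_state (tp (Suc i)) = \<Phi> (tp i) (tp (Suc i)) *v xs (Suc i)"
    using Suc.IH i by simp
  show ?case
    using transition_cancel[OF _ _ eq] tp_bounds[of i] tp_bounds[of "Suc i"] i by simp
qed

lemma feasible_opt: "feasibleP A B a b m tp xs opt_state opt_control"
  unfolding feasibleP_def admissible_iff_integral_solution
proof (intro conjI allI impI measurable_opt_control integral_solution_opt_state opt_state_tp)
  show "(\<lambda>s. (B s *v opt_control s) \<bullet> (B s *v opt_control s)) integrable_on {a..b}"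
    by (rule integrable_on_piecewise[of "\<lambda>i s. opt_forcing i s \<bullet> opt_forcing i s"])
      (auto intro!: integrable_continuous_real continuous_intros
        continuous_on_subset[OF continuous_on_opt_forcing segment_subset] simp: B_opt_control)
qed

definition excess :: "(real \<Rightarrow> real^'n) \<Rightarrow> nat \<Rightarrow> real" where
  "excess u i = integral {tp i..tp (Suc i)} (\<lambda>s. (B s *v u s - opt_forcing i s) \<bullet> (B s *v u s - opt_forcing i s))"

lemma feasible_segment_solution:
  assumes "feasibleP A B a b m tp xs x u" "i < m"
  shows "integral_solution A (\<lambda>s. B s *v u s) (tp i) (tp (Suc i)) x"
proof -
  have "integral_solution A (\<lambda>s. B s *v u s) a b x"
    using assms(1) by (simp add: feasibleP_def admissible_iff_integral_solution)
  then show ?thesis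
    by (rule integral_solution_subinterval) (use tp_bounds tp_less[of i] assms(2) in auto)
qed

lemma feasible_moment:
  assumes "feasibleP A B a b m tp xs x u" "i < m"
  shows "integral {tp i..tp (Suc i)} (\<lambda>s. \<Phi> (tp i) s *v (B s *v u s)) = moment i"
proof -
  have "integral {tp i..tp (Suc i)} (\<lambda>s. \<Phi> (tp i) s *v (B s *v u s))
      = \<Phi> (tp i) (tp (Suc i)) *v x (tp (Suc i)) - x (tp i)"
    using feasible_segment_solution[OF assms]
    by (rule integral_solution_transfer) (use tp_bounds tp_less[of i] assms(2) in auto)
  then show ?thesis
    using assms by (simp add: moment_def feasibleP_def)
qed

lemma feasible_segment_energy_split:
  assumes feasible: "feasibleP A B a b m tp xs x u" and i: "i < m"
  shows "(\<lambda>s. (B s *v u s - opt_forcing i s) \<bullet> (B s *v u s - opt_forcing i s)) integrable_on {tp i..tp (Suc i)}"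
    and "integral {tp i..tp (Suc i)} (\<lambda>s. (B s *v u s) \<bullet> (B s *v u s))
      = integral {tp i..tp (Suc i)} (\<lambda>s. opt_forcing i s \<bullet> opt_forcing i s) + excess u i"
proof -
  have sol: "integral_solution A (\<lambda>s. B s *v u s) a b x" and
    energy: "(\<lambda>s. (B s *v u s) \<bullet> (B s *v u s)) integrable_on {a..b}"
    using feasible by (auto simp: feasibleP_def admissible_iff_integral_solution)
  have K: "continuous_on {tp i..tp (Suc i)} (\<Phi> (tp i))"
    using i by (intro continuous_on_subset[OF continuous_on_transition_right segment_subset]) (auto simp: tp_bounds)
  have w: "(\<lambda>s. B s *v u s) absolutely_integrable_on {tp i..tp (Suc i)}"
    using integral_solution_forcing_absolutely_integrable[OF sol continuous_A] segment_subset[OF i]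
    by (rule absolutely_integrable_on_subinterval)
  have ww: "(\<lambda>s. (B s *v u s) \<bullet> (B s *v u s)) integrable_on {tp i..tp (Suc i)}"
    using energy segment_subset[OF i] by (rule integrable_on_subinterval)
  define p where "p = matrix_inv (gram i) *v moment i"
  have "integral {tp i..tp (Suc i)} (\<lambda>s. \<Phi> (tp i) s *v (B s *v u s)) = gram i *v p"
    using feasible_moment[OF feasible i] invertible_gram[OF i]
    by (simp add: p_def matrix_vector_mul_assoc matrix_inv_right)
  note split = integral_inner_self_moment_split[OF K w ww this[unfolded gram_def]]
  have w0: "opt_forcing i = (\<lambda>s. transpose (\<Phi> (tp i) s) *v p)"
    by (simp add: fun_eq_iff opt_forcing_def p_def)
  show "(\<lambda>s. (B s *v u s - opt_forcing i s) \<bullet> (B s *v u s - opt_forcing i s)) integrable_on {tp i..tp (Suc i)}"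
    unfolding w0 by (rule split(1))
  show "integral {tp i..tp (Suc i)} (\<lambda>s. (B s *v u s) \<bullet> (B s *v u s))
      = integral {tp i..tp (Suc i)} (\<lambda>s. opt_forcing i s \<bullet> opt_forcing i s) + excess u i"
    unfolding excess_def w0 by (rule split(2))
qed

lemma excess_nonneg: "feasibleP A B a b m tp xs x u \<Longrightarrow> i < m \<Longrightarrow> excess u i \<ge> 0"
  unfolding excess_def by (rule integral_nonneg[OF feasible_segment_energy_split(1)]) auto

lemma excess_sum_nonneg: "feasibleP A B a b m tp xs x u \<Longrightarrow> (\<Sum>i<m. excess u i) \<ge> 0"
  by (intro sum_nonneg excess_nonneg) auto

lemma excess_opt_control:
  assumes "i < m"
  shows "excess opt_control i = 0"
proof -
  have "excess opt_control i = integral {tp i..tp (Suc i)} (\<lambda>_. 0 :: real)"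
    unfolding excess_def by (rule integral_spike[of "{tp (Suc i)}"]) (auto simp: B_opt_control[OF assms])
  then show ?thesis by simp
qed

lemma cost_split:
  assumes "feasibleP A B a b m tp xs x u"
  shows "cost B a b u = cost B a b opt_control + (\<Sum>i<m. excess u i)"
proof -
  have cost_sum: "cost B a b u' = (\<Sum>i<m. integral {tp i..tp (Suc i)} (\<lambda>s. opt_forcing i s \<bullet> opt_forcing i s))
      + (\<Sum>i<m. excess u' i)" if "feasibleP A B a b m tp xs x' u'" for x' u'
  proof -
    have "(\<lambda>s. (B s *v u' s) \<bullet> (B s *v u' s)) integrable_on {tp 0..tp m}"
      using that by (simp add: feasibleP_def admissible_iff_integral_solution tp_0 tp_m)
    then have "cost B a b u' = (\<Sum>i<m. integral {tp i..tp (Suc i)} (\<lambda>s. (B s *v u' s) \<bullet> (B s *v u' s)))"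
      unfolding cost_def using tp_less by (subst integral_consecutive_intervals[symmetric]) (auto simp: tp_0 tp_m less_imp_le)
    then show ?thesis
      by (simp add: feasible_segment_energy_split(2)[OF that] sum.distrib)
  qed
  show ?thesis
    using cost_sum[OF assms] cost_sum[OF feasible_opt] by (simp add: excess_opt_control)
qed

lemma optimal_opt: "optimalP A B a b m tp xs opt_state opt_control"
  unfolding optimalP_def
proof (intro conjI allI impI feasible_opt)
  fix x u assume feasible: "feasibleP A B a b m tp xs x u"
  show "cost B a b opt_control \<le> cost B a b u"
    using cost_split[OF feasible] excess_sum_nonneg[OF feasible] by linarith
qed

lemma optimal_B_control_ae:
  assumes opt: "optimalP A B a b m tp xs x u" and i: "i < m"
  shows "AE t in lebesgue. t \<in> {tp i..tp (Suc i)} \<longrightarrow> B t *v u t = opt_forcing i t"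
proof -
  have feasible: "feasibleP A B a b m tp xs x u"
    using opt by (simp add: optimalP_def)
  have "cost B a b u \<le> cost B a b opt_control"
    using opt feasible_opt by (simp add: optimalP_def)
  then have "(\<Sum>j<m. excess u j) = 0"
    using cost_split[OF feasible] excess_sum_nonneg[OF feasible] by simp
  then have "excess u i = 0"
    using sum_nonneg_eq_0_iff[of "{..<m}" "excess u"] excess_nonneg[OF feasible] i by simp
  then have "AE t in lebesgue. t \<in> {tp i..tp (Suc i)} \<longrightarrow>
      (B t *v u t - opt_forcing i t) \<bullet> (B t *v u t - opt_forcing i t) = 0"
    unfolding excess_def by (intro nonneg_integral_eq_0_imp_AE feasible_segment_energy_split(1)[OF feasible i]) auto
  then show ?thesis
    by eventually_elim simp
qed

lemma optimal_state_eq: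
  assumes opt: "optimalP A B a b m tp xs x u" and i: "i < m" and t: "t \<in> {tp i..tp (Suc i)}"
  shows "x t = \<Phi> t (tp i) *v xs i
    + (integral {tp i..t} (\<lambda>s. \<Phi> t s ** transpose (\<Phi> (tp i) s)) ** matrix_inv (gram i)) *v moment i"
proof -
  have feasible: "feasibleP A B a b m tp xs x u"
    using opt by (simp add: optimalP_def)
  have bounds: "a \<le> tp i" "tp i \<le> t" "t \<le> tp (Suc i)" "tp (Suc i) \<le> b"
    using t i tp_bounds[of i] tp_bounds[of "Suc i"] by auto
  have "x t = \<Phi> t (tp i) *v (x (tp i) + integral {tp i..t} (\<lambda>s. \<Phi> (tp i) s *v (B s *v u s)))"
    using feasible_segment_solution[OF feasible i]
    by (rule integral_solution_eq_variation_of_constants) (use bounds t in auto)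
  also have "AE s in lebesgue. s \<in> {tp i..t} \<longrightarrow> \<Phi> (tp i) s *v (B s *v u s) = \<Phi> (tp i) s *v opt_forcing i s"
    using optimal_B_control_ae[OF opt i] by eventually_elim (use bounds in auto)
  then have "integral {tp i..t} (\<lambda>s. \<Phi> (tp i) s *v (B s *v u s)) = integral {tp i..t} (\<lambda>s. \<Phi> (tp i) s *v opt_forcing i s)"
    by (rule integral_spike_AE)
  also have "\<dots> = integral {tp i..t} (\<lambda>s. \<Phi> (tp i) s ** transpose (\<Phi> (tp i) s)) *v (matrix_inv (gram i) *v moment i)"
    using bounds i by (intro gram_opt_forcing) auto
  finally show ?thesis
    using feasible i transition_mult_integral_gram[of "tp i" t] bounds
    by (simp add: feasibleP_def matrix_vector_right_distrib matrix_vector_mul_assoc matrix_mul_assoc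
        del: transpose_matrix_vector)
qed

lemma optimal_control_ae:
  assumes opt: "optimalP A B a b m tp xs x u" and i: "i < m"
  shows "AE t in lebesgue. t \<in> {tp i..tp (Suc i)} \<longrightarrow>
    u t = matrix_inv (B t) *v (transpose (\<Phi> (tp i) t) *v (matrix_inv (gram i) *v moment i))"
  using optimal_B_control_ae[OF opt i]
proof eventually_elim
  case (elim t)
  show ?case
  proof
    assume t: "t \<in> {tp i..tp (Suc i)}"
    then have "invertible (B t)"
      using segment_subset[OF i] invertible_B by auto
    then have "u t = matrix_inv (B t) *v (B t *v u t)"
      by (simp add: matrix_vector_mul_assoc matrix_inv_left)
    then show "u t = matrix_inv (B t) *v (transpose (\<Phi> (tp i) t) *v (matrix_inv (gram i) *v moment i))"
      using elim t by (simp add: opt_forcing_def del: transpose_matrix_vector)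
  qed
qed

end

theorem theorem3p2:
  fixes A B :: "real \<Rightarrow> real^'n^'n"
    and \<Phi> :: "real \<Rightarrow> real \<Rightarrow> real^'n^'n"
    and a b :: real and m :: nat and tp :: "nat \<Rightarrow> real"
    and xs :: "nat \<Rightarrow> real^'n"
  assumes part: "m \<ge> 1" "tp 0 = a" "tp m = b" "\<And>i. i < m \<Longrightarrow> tp i < tp (Suc i)"
    and H1: "\<And>t. t \<in> {a..b} \<Longrightarrow> invertible (B t)"
    and H2: "completely_controllable A B a b"
    and H3: "A C1_differentiable_on {a..b}" "B C1_differentiable_on {a..b}"
    and Phi: "state_transition A a b \<Phi>"
  shows "(\<exists>x u. optimalP A B a b m tp xs x u) \<and>
    (\<forall>x u. optimalP A B a b m tp xs x u \<longrightarrow>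
      (\<forall>i<m. let S = integral {tp i..tp (Suc i)} (\<lambda>s. \<Phi> (tp i) s ** transpose (\<Phi> (tp i) s));
                 v = \<Phi> (tp i) (tp (Suc i)) *v xs (Suc i) - xs i in
         (\<forall>t\<in>{tp i..tp (Suc i)}.
            x t = \<Phi> t (tp i) *v xs i
                  + (integral {tp i..t} (\<lambda>s. \<Phi> t s ** transpose (\<Phi> (tp i) s)) ** matrix_inv S) *v v) \<and>
         (AE t in lebesgue. t \<in> {tp i..tp (Suc i)} \<longrightarrow>
            u t = matrix_inv (B t) *v (transpose (\<Phi> (tp i) t) *v (matrix_inv S *v v)))))"
proof -
  interpret min_energy_interpolation A a b \<Phi> B m tp xs
    using part H1 Phi C1_differentiable_imp_continuous_on[OF H3(1)] C1_differentiable_imp_continuous_on[OF H3(2)]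
    by unfold_locales auto
  show ?thesis
    using optimal_opt optimal_state_eq optimal_control_ae
    unfolding Let_def gram_def[symmetric] moment_def[symmetric] by blast
qed

end
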